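(* Let $C$ be a circle in the plane and let $E$ be an ellipse lying in the interior of the disk bounded by $C$, such that $E$ is a Poncelet $3$-ellipse for $C$, and such that the center of $E$ coincides with the center of $C$. For each triangle that is inscribed in $C$ (all three vertices on $C$) and circumscribes $E$ (each side tangent to $E$), form three circles: for each side of the triangle, the circle centered at the midpoint of that side and passing through the vertex of the triangle opposite to that side. Then the sum of the areas of these three circles is the same for every such triangle; that is, it depends only on the pair $(E, C)$.
   Context: An ellipse $E$ in the interior of a circle $C$ is called a Poncelet $3$-ellipse (for $C$) if there exists a triangle inscribed in $C$ whose three sides are tangent to $E$; by Poncelet's closure theorem, every point of $C$ is then a vertex of such a triangle (these triangles are called Poncelet triangles). *)

theory Defs
  imports "HOL-Analysis.Analysis"
begin

definition ellipse_curve :: "complex \<Rightarrow> real \<Rightarrow> real \<Rightarrow> real \<Rightarrow> complex set" where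
  "ellipse_curve c a b th =
     {c + cis th * Complex (a * cos t) (b * sin t) | t. True}"

definition line_through :: "complex \<Rightarrow> complex \<Rightarrow> complex set" where
  "line_through p q = {p + of_real s * (q - p) | s. True}"

definition tangent_to :: "complex set \<Rightarrow> complex \<Rightarrow> complex \<Rightarrow> bool" where
  "tangent_to E p q \<longleftrightarrow> (\<exists>!x. x \<in> line_through p q \<and> x \<in> E)"

definition poncelet_triangle ::
  "complex set \<Rightarrow> complex \<Rightarrow> real \<Rightarrow> complex \<Rightarrow> complex \<Rightarrow> complex \<Rightarrow> bool" where
  "poncelet_triangle E c R A B C \<longleftrightarrow>
     A \<in> sphere c R \<and> B \<in> sphere c R \<and> C \<in> sphere c R \<and>
     A \<noteq> B \<and> B \<noteq> C \<and> C \<noteq> A \<and>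
     tangent_to E A B \<and> tangent_to E B C \<and> tangent_to E C A"

definition poncelet3 :: "complex set \<Rightarrow> complex \<Rightarrow> real \<Rightarrow> bool" where
  "poncelet3 E c R \<longleftrightarrow> E \<subseteq> ball c R \<and> (\<exists>A B C. poncelet_triangle E c R A B C)"

definition median_circles_area :: "complex \<Rightarrow> complex \<Rightarrow> complex \<Rightarrow> real" where
  "median_circles_area A B C =
     pi * (cmod ((B + C) / 2 - A))\<^sup>2 + pi * (cmod ((C + A) / 2 - B))\<^sup>2
     + pi * (cmod ((A + B) / 2 - C))\<^sup>2"

end

theory Submission
  imports Defs "HOL-Library.Quadratic_Discriminant"
begin

text \<open>Rotate and translate so that the ellipse is axis-parallel and centred at the origin, and
  scale the circle to the unit circle. A chord \<open>z w\<close> of the unit circle is then tangent to the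
  ellipse iff \<open>R\<^sup>2 (z\<^sup>2 + w\<^sup>2) + (b\<^sup>2 - a\<^sup>2) (z\<^sup>2 w\<^sup>2 + 1) = 2 (a\<^sup>2 + b\<^sup>2 - R\<^sup>2) z w\<close>,
  a symmetric biquadratic relation. For three pairwise related vertices, Vieta's formulas give
  \<open>R\<^sup>2 (z\<^sub>1 + z\<^sub>2 + z\<^sub>3) = (b\<^sup>2 - a\<^sup>2) z\<^sub>1 z\<^sub>2 z\<^sub>3\<close>, so the centroid of every such triangle lies
  at distance \<open>\<bar>b\<^sup>2 - a\<^sup>2\<bar> / (3 R)\<close> from the centre. The sum of the squared medians of a
  triangle inscribed in a circle depends only on this distance.\<close>

definition frame_coord :: "complex \<Rightarrow> real \<Rightarrow> complex \<Rightarrow> complex" where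
  "frame_coord c th x = cnj (cis th) * (x - c)"

lemma frame_coord_inverse: "c + cis th * frame_coord c th x = x"
  by (simp add: frame_coord_def mult.assoc[symmetric] cis_cnj cis_mult)

lemma frame_coord_eq_iff: "frame_coord c th x = z \<longleftrightarrow> x = c + cis th * z"
proof
  show "frame_coord c th x = z \<Longrightarrow> x = c + cis th * z"
    using frame_coord_inverse by metis
  show "x = c + cis th * z \<Longrightarrow> frame_coord c th x = z"
    by (simp add: frame_coord_def mult.assoc[symmetric] cis_cnj cis_mult)
qed

lemma frame_coord_inj: "frame_coord c th x = frame_coord c th y \<Longrightarrow> x = y"
  by (metis frame_coord_inverse)

lemma norm_frame_coord [simp]: "cmod (frame_coord c th x) = dist x c"
  by (simp add: frame_coord_def norm_mult dist_norm)

lemma frame_coord_segment: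
  "frame_coord c th (P + of_real s * (Q - P))
     = frame_coord c th P + of_real s * (frame_coord c th Q - frame_coord c th P)"
  by (simp add: frame_coord_def algebra_simps)

lemma mem_ellipse_curve_iff:
  assumes "a > 0" "b > 0"
  shows "x \<in> ellipse_curve c a b th \<longleftrightarrow>
    b\<^sup>2 * (Re (frame_coord c th x))\<^sup>2 + a\<^sup>2 * (Im (frame_coord c th x))\<^sup>2 = a\<^sup>2 * b\<^sup>2"
    (is "_ \<longleftrightarrow> b\<^sup>2 * ?X\<^sup>2 + a\<^sup>2 * ?Y\<^sup>2 = _")
proof -
  have "x \<in> ellipse_curve c a b th \<longleftrightarrow> (\<exists>t. frame_coord c th x = Complex (a * cos t) (b * sin t))"
    unfolding ellipse_curve_def frame_coord_eq_iff by blast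
  also have "\<dots> \<longleftrightarrow> (\<exists>t. ?X / a = cos t \<and> ?Y / b = sin t)"
    using assms by (auto simp: complex_eq_iff field_simps)
  also have "\<dots> \<longleftrightarrow> (?X / a)\<^sup>2 + (?Y / b)\<^sup>2 = 1"
  proof
    show "\<exists>t. ?X / a = cos t \<and> ?Y / b = sin t \<Longrightarrow> (?X / a)\<^sup>2 + (?Y / b)\<^sup>2 = 1"
      by auto
    show "(?X / a)\<^sup>2 + (?Y / b)\<^sup>2 = 1 \<Longrightarrow> \<exists>t. ?X / a = cos t \<and> ?Y / b = sin t"
      using sincos_total_2pi by blast
  qed
  also have "\<dots> \<longleftrightarrow> b\<^sup>2 * ?X\<^sup>2 + a\<^sup>2 * ?Y\<^sup>2 = a\<^sup>2 * b\<^sup>2"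
    using assms by (auto simp: power_divide field_simps)
  finally show ?thesis .
qed

lemma discrim_eq_zero_if_unique_root:
  assumes "a \<noteq> 0" "\<exists>!x. a * x\<^sup>2 + b * x + c = 0"
  shows "discrim a b c = 0"
proof -
  from assms(2) obtain x where x: "a * x\<^sup>2 + b * x + c = 0"
    and unique: "\<And>y. a * y\<^sup>2 + b * y + c = 0 \<Longrightarrow> y = x"
    by blast
  have "discrim a b c \<ge> 0"
    using discriminant_negative[OF assms(1)] x by (meson not_le)
  moreover have "\<not> discrim a b c > 0"
    using discriminant_pos_distinct[OF assms(1), of b c x] unique by blast
  ultimately show ?thesis by simp
qed

lemma standard_ellipse_tangent_condition:
  fixes a b :: real and p d :: complex
  assumes "a \<noteq> 0" "b \<noteq> 0" "d \<noteq> 0"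
    and "\<exists>!s. b\<^sup>2 * (Re (p + of_real s * d))\<^sup>2 + a\<^sup>2 * (Im (p + of_real s * d))\<^sup>2 = a\<^sup>2 * b\<^sup>2"
  shows "b\<^sup>2 * (Re d)\<^sup>2 + a\<^sup>2 * (Im d)\<^sup>2 = (Im (cnj p * d))\<^sup>2"
proof -
  define qa where "qa = b\<^sup>2 * (Re d)\<^sup>2 + a\<^sup>2 * (Im d)\<^sup>2"
  define qb where "qb = 2 * (b\<^sup>2 * Re p * Re d + a\<^sup>2 * Im p * Im d)"
  define qc where "qc = b\<^sup>2 * (Re p)\<^sup>2 + a\<^sup>2 * (Im p)\<^sup>2 - a\<^sup>2 * b\<^sup>2"
  have "Re d \<noteq> 0 \<or> Im d \<noteq> 0"
    using assms(3) complex_eq_iff by force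
  then have "qa > 0"
    using assms(1,2) unfolding qa_def by (simp add: sum_power2_gt_zero_iff flip: power_mult_distrib)
  moreover have "b\<^sup>2 * (Re (p + of_real s * d))\<^sup>2 + a\<^sup>2 * (Im (p + of_real s * d))\<^sup>2 = a\<^sup>2 * b\<^sup>2
      \<longleftrightarrow> qa * s\<^sup>2 + qb * s + qc = 0" for s
  proof -
    have "b\<^sup>2 * (Re (p + of_real s * d))\<^sup>2 + a\<^sup>2 * (Im (p + of_real s * d))\<^sup>2 - a\<^sup>2 * b\<^sup>2
        = qa * s\<^sup>2 + qb * s + qc"
      unfolding qa_def qb_def qc_def by (simp add: power2_eq_square algebra_simps)
    then show ?thesis by linarith
  qed
  then have "\<exists>!s. qa * s\<^sup>2 + qb * s + qc = 0"
    using assms(4) by simp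
  ultimately have "discrim qa qb qc = 0"
    by (simp add: discrim_eq_zero_if_unique_root)
  moreover have "discrim qa qb qc = 4 * a\<^sup>2 * b\<^sup>2 * (qa - (Im (cnj p * d))\<^sup>2)"
    unfolding discrim_def qa_def qb_def qc_def by (simp add: power2_eq_square algebra_simps)
  ultimately show ?thesis
    using assms(1,2) unfolding qa_def by simp
qed

lemma tangent_to_ellipse_curveD:
  assumes "a > 0" "b > 0" "P \<noteq> Q" "tangent_to (ellipse_curve c a b th) P Q"
  defines "p \<equiv> frame_coord c th P" and "q \<equiv> frame_coord c th Q"
  shows "b\<^sup>2 * (Re (q - p))\<^sup>2 + a\<^sup>2 * (Im (q - p))\<^sup>2 = (Im (cnj p * q))\<^sup>2"
proof -
  let ?E = "ellipse_curve c a b th"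
  have "\<exists>!s. P + of_real s * (Q - P) \<in> ?E"
  proof -
    from assms(4) obtain x where x: "x \<in> line_through P Q" "x \<in> ?E"
      and unique: "\<And>y. y \<in> line_through P Q \<Longrightarrow> y \<in> ?E \<Longrightarrow> y = x"
      unfolding tangent_to_def by blast
    from x(1) obtain s where s: "x = P + of_real s * (Q - P)"
      unfolding line_through_def by blast
    show ?thesis
    proof (rule ex1I[of _ s])
      show "P + of_real s * (Q - P) \<in> ?E" using x(2) s by simp
      show "t = s" if "P + of_real t * (Q - P) \<in> ?E" for t
        using unique[OF _ that] s assms(3) unfolding line_through_def by auto
    qed
  qed
  then have unique: "\<exists>!s. b\<^sup>2 * (Re (p + of_real s * (q - p)))\<^sup>2 + a\<^sup>2 * (Im (p + of_real s * (q - p)))\<^sup>2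
      = a\<^sup>2 * b\<^sup>2"
    unfolding mem_ellipse_curve_iff[OF assms(1,2)] frame_coord_segment p_def q_def .
  have "q - p \<noteq> 0"
    using assms(3) frame_coord_inj unfolding p_def q_def by fastforce
  then have "b\<^sup>2 * (Re (q - p))\<^sup>2 + a\<^sup>2 * (Im (q - p))\<^sup>2 = (Im (cnj p * (q - p)))\<^sup>2"
    using standard_ellipse_tangent_condition[OF _ _ _ unique] assms(1,2) by simp
  then show ?thesis
    by (simp add: right_diff_distrib mult.commute[of "cnj p" p])
qed

lemma unit_chord_tangency:
  fixes z w :: complex and a b R :: real
  assumes "cmod z = 1" "cmod w = 1" "z \<noteq> w"
    and "b\<^sup>2 * (Re (w - z))\<^sup>2 + a\<^sup>2 * (Im (w - z))\<^sup>2 = R\<^sup>2 * (Im (cnj z * w))\<^sup>2"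
  shows "R\<^sup>2 * Re (z * cnj w) + (b\<^sup>2 - a\<^sup>2) * Re (z * w) = a\<^sup>2 + b\<^sup>2 - R\<^sup>2"
proof -
  have h: "(Re z)\<^sup>2 + (Im z)\<^sup>2 = 1" "(Re w)\<^sup>2 + (Im w)\<^sup>2 = 1"
    using assms(1,2) by (simp_all flip: cmod_power2)
  have factor: "b\<^sup>2 * (Re (w - z))\<^sup>2 + a\<^sup>2 * (Im (w - z))\<^sup>2 - R\<^sup>2 * (Im (cnj z * w))\<^sup>2
    = (1 - Re (z * cnj w)) * (a\<^sup>2 + b\<^sup>2 - R\<^sup>2 - R\<^sup>2 * Re (z * cnj w) - (b\<^sup>2 - a\<^sup>2) * Re (z * w))"
    using h by simp algebra
  have "0 < (cmod (z - w))\<^sup>2"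
    using assms(3) by simp
  also have "\<dots> = 2 - 2 * Re (z * cnj w)"
    using h unfolding cmod_power2 by (simp add: power2_diff)
  finally have "1 - Re (z * cnj w) \<noteq> 0"
    by linarith
  then show ?thesis
    using factor assms(4) by simp
qed

lemma unit_biquadratic_of_Re_relation:
  fixes z w :: complex and \<alpha> \<beta> \<gamma> :: real
  assumes "cmod z = 1" "cmod w = 1" "\<alpha> * Re (z * cnj w) + \<beta> * Re (z * w) = \<gamma>"
  shows "of_real \<alpha> * (z\<^sup>2 + w\<^sup>2) + of_real \<beta> * (z\<^sup>2 * w\<^sup>2 + 1) = 2 * of_real \<gamma> * z * w"
proof -
  have unit: "z * cnj z = 1" "w * cnj w = 1"
    using assms(1,2) by (simp_all flip: complex_norm_square)
  have "2 * \<gamma> = \<alpha> * (2 * Re (z * cnj w)) + \<beta> * (2 * Re (z * w))"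
    using assms(3) by linarith
  then have "of_real (2 * \<gamma>) = of_real \<alpha> * (z * cnj w + cnj (z * cnj w)) + of_real \<beta> * (z * w + cnj (z * w))"
    by (simp only: complex_add_cnj of_real_add of_real_mult)
  then have "2 * of_real \<gamma> = of_real \<alpha> * (z * cnj w + cnj z * w) + of_real \<beta> * (z * w + cnj z * cnj w)"
    by simp
  then show ?thesis
    using unit by algebra
qed

lemma symmetric_biquadratic_triangle:
  fixes \<alpha> \<beta> \<gamma> x y z :: "'a :: idom"
  assumes xy: "\<alpha> * (x\<^sup>2 + y\<^sup>2) + \<beta> * (x\<^sup>2 * y\<^sup>2 + 1) = 2 * \<gamma> * x * y"
    and yz: "\<alpha> * (y\<^sup>2 + z\<^sup>2) + \<beta> * (y\<^sup>2 * z\<^sup>2 + 1) = 2 * \<gamma> * y * z"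
    and zx: "\<alpha> * (z\<^sup>2 + x\<^sup>2) + \<beta> * (z\<^sup>2 * x\<^sup>2 + 1) = 2 * \<gamma> * z * x"
    and "x \<noteq> y" "y \<noteq> z" "z \<noteq> x"
  shows "\<alpha> * (x + y + z) = \<beta> * (x * y * z)"
proof -
  \<comment> \<open>For fixed \<open>x\<close>, \<open>y\<close> and \<open>z\<close> are the two roots of a quadratic, so Vieta determines \<open>y z\<close>;
    multiplying by \<open>y - z\<close> instead of dividing by the leading coefficient avoids a case split.\<close>
  have "(y - z) * ((\<beta> * x\<^sup>2 + \<alpha>) * y * z - (\<alpha> * x\<^sup>2 + \<beta>)) = 0"
    using xy zx by algebra
  then have x: "(\<beta> * x\<^sup>2 + \<alpha>) * y * z = \<alpha> * x\<^sup>2 + \<beta>"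
    using \<open>y \<noteq> z\<close> by simp
  have "(z - x) * ((\<beta> * y\<^sup>2 + \<alpha>) * z * x - (\<alpha> * y\<^sup>2 + \<beta>)) = 0"
    using xy yz by algebra
  then have y: "(\<beta> * y\<^sup>2 + \<alpha>) * z * x = \<alpha> * y\<^sup>2 + \<beta>"
    using \<open>z \<noteq> x\<close> by simp
  have "(x - y) * (\<alpha> * (x + y + z) - \<beta> * (x * y * z)) = 0"
    using x y by algebra
  then show ?thesis
    using \<open>x \<noteq> y\<close> by simp
qed

lemma poncelet_side_relation:
  assumes "a > 0" "b > 0" "R > 0" "A \<in> sphere c R" "B \<in> sphere c R" "A \<noteq> B"
    and "tangent_to (ellipse_curve c a b th) A B"
  defines "z \<equiv> frame_coord c th A / of_real R" and "w \<equiv> frame_coord c th B / of_real R"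
  shows "of_real (R\<^sup>2) * (z\<^sup>2 + w\<^sup>2) + of_real (b\<^sup>2 - a\<^sup>2) * (z\<^sup>2 * w\<^sup>2 + 1)
    = 2 * of_real (a\<^sup>2 + b\<^sup>2 - R\<^sup>2) * z * w"
proof -
  have p: "frame_coord c th A = of_real R * z" and q: "frame_coord c th B = of_real R * w"
    using assms(3) unfolding z_def w_def by simp_all
  have unit: "cmod z = 1" "cmod w = 1"
    using assms(3-5) unfolding z_def w_def by (simp_all add: norm_divide dist_commute)
  have "z \<noteq> w"
    using assms(6) p q by (metis frame_coord_inj)
  moreover have "b\<^sup>2 * (Re (w - z))\<^sup>2 + a\<^sup>2 * (Im (w - z))\<^sup>2 = R\<^sup>2 * (Im (cnj z * w))\<^sup>2"
  proof (rule mult_left_cancel[THEN iffD1])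
    show "R\<^sup>2 \<noteq> 0"
      using assms(3) by simp
    show "R\<^sup>2 * (b\<^sup>2 * (Re (w - z))\<^sup>2 + a\<^sup>2 * (Im (w - z))\<^sup>2) = R\<^sup>2 * (R\<^sup>2 * (Im (cnj z * w))\<^sup>2)"
      using tangent_to_ellipse_curveD[OF assms(1,2,6,7)] unfolding p q by simp algebra
  qed
  ultimately show ?thesis
    using unit_biquadratic_of_Re_relation[OF unit unit_chord_tangency[OF unit]] by simp
qed

lemma poncelet_triangle_vertex_sum_norm:
  assumes "a > 0" "b > 0" "R > 0" "poncelet_triangle (ellipse_curve c a b th) c R A B C"
  shows "cmod (A + B + C - 3 * c) = \<bar>b\<^sup>2 - a\<^sup>2\<bar> / R"
proof -
  define z where "z X = frame_coord c th X / of_real R" for X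
  have on_circle: "A \<in> sphere c R" "B \<in> sphere c R" "C \<in> sphere c R"
    and distinct: "A \<noteq> B" "B \<noteq> C" "C \<noteq> A"
    and tangent: "tangent_to (ellipse_curve c a b th) A B" "tangent_to (ellipse_curve c a b th) B C"
      "tangent_to (ellipse_curve c a b th) C A"
    using assms(4) unfolding poncelet_triangle_def by simp_all
  have "z X \<noteq> z Y" if "X \<noteq> Y" for X Y
    using that assms(3) frame_coord_inj unfolding z_def by fastforce
  then have relation: "of_real (R\<^sup>2) * (z A + z B + z C) = of_real (b\<^sup>2 - a\<^sup>2) * (z A * z B * z C)"
    using symmetric_biquadratic_triangle
      poncelet_side_relation[OF assms(1-3) on_circle(1,2) distinct(1) tangent(1)]
      poncelet_side_relation[OF assms(1-3) on_circle(2,3) distinct(2) tangent(2)]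
      poncelet_side_relation[OF assms(1-3) on_circle(3,1) distinct(3) tangent(3)]
      distinct unfolding z_def by blast
  have "cmod (z X) = 1" if "X \<in> sphere c R" for X
    using that assms(3) unfolding z_def by (simp add: norm_divide dist_commute)
  then have norm_sum: "R\<^sup>2 * cmod (z A + z B + z C) = \<bar>b\<^sup>2 - a\<^sup>2\<bar>"
    using arg_cong[OF relation, of cmod] on_circle
    by (simp add: norm_mult norm_power flip: of_real_power of_real_diff)
  have centroid: "A + B + C - 3 * c = cis th * of_real R * (z A + z B + z C)"
  proof -
    have "X - c = cis th * of_real R * z X" for X
    proof -
      have "X - c = cis th * frame_coord c th X"
        by (metis frame_coord_inverse add_diff_cancel_left')
      then show ?thesis
        using assms(3) unfolding z_def by simp
    qed
    then have "(A - c) + (B - c) + (C - c) = cis th * of_real R * (z A + z B + z C)"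
      by (simp add: distrib_left)
    then show ?thesis
      by (simp add: algebra_simps)
  qed
  show ?thesis
    using assms(3) norm_sum unfolding centroid norm_mult by (simp add: power2_eq_square field_simps)
qed

lemma sum_median_norms_sq:
  fixes u v w :: complex
  shows "(cmod ((v + w) / 2 - u))\<^sup>2 + (cmod ((w + u) / 2 - v))\<^sup>2 + (cmod ((u + v) / 2 - w))\<^sup>2
    = (9 * ((cmod u)\<^sup>2 + (cmod v)\<^sup>2 + (cmod w)\<^sup>2) - 3 * (cmod (u + v + w))\<^sup>2) / 4"
  unfolding cmod_power2 by (simp add: power2_eq_square field_simps)

lemma median_circles_area_eq:
  "median_circles_area A B C = pi / 4 *
     (9 * ((cmod (A - c))\<^sup>2 + (cmod (B - c))\<^sup>2 + (cmod (C - c))\<^sup>2) - 3 * (cmod (A + B + C - 3 * c))\<^sup>2)"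
proof -
  have shift: "(Y + Z) / 2 - X = ((Y - c) + (Z - c)) / 2 - (X - c)" for X Y Z :: complex
    by (simp add: field_simps)
  have "median_circles_area A B C = pi * ((cmod (((B - c) + (C - c)) / 2 - (A - c)))\<^sup>2
      + (cmod (((C - c) + (A - c)) / 2 - (B - c)))\<^sup>2 + (cmod (((A - c) + (B - c)) / 2 - (C - c)))\<^sup>2)"
    unfolding median_circles_area_def shift[of B C A] shift[of C A B] shift[of A B C]
    by (simp only: distrib_left)
  also have "\<dots> = pi / 4 * (9 * ((cmod (A - c))\<^sup>2 + (cmod (B - c))\<^sup>2 + (cmod (C - c))\<^sup>2)
      - 3 * (cmod ((A - c) + (B - c) + (C - c)))\<^sup>2)"
    unfolding sum_median_norms_sq by simp
  also have "(A - c) + (B - c) + (C - c) = A + B + C - 3 * c"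
    by simp
  finally show ?thesis .
qed

theorem theorem2p1:
  fixes c :: complex and R a b th :: real
  assumes "R > 0" and "a > 0" and "b > 0"
    and "ellipse_curve c a b th \<subseteq> ball c R"
    and "poncelet3 (ellipse_curve c a b th) c R"
  shows "\<exists>K. \<forall>A B C. poncelet_triangle (ellipse_curve c a b th) c R A B C
                 \<longrightarrow> median_circles_area A B C = K"
proof (intro exI[of _ "pi / 4 * (27 * R\<^sup>2 - 3 * (\<bar>b\<^sup>2 - a\<^sup>2\<bar> / R)\<^sup>2)"] allI impI)
  fix A B C
  assume triangle: "poncelet_triangle (ellipse_curve c a b th) c R A B C"
  then have "cmod (A - c) = R" "cmod (B - c) = R" "cmod (C - c) = R"
    unfolding poncelet_triangle_def by (simp_all add: dist_norm norm_minus_commute)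
  then show "median_circles_area A B C = pi / 4 * (27 * R\<^sup>2 - 3 * (\<bar>b\<^sup>2 - a\<^sup>2\<bar> / R)\<^sup>2)"
    using median_circles_area_eq[of A B C c]
      poncelet_triangle_vertex_sum_norm[OF assms(2,3,1) triangle] by simp
qed

end
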